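(* Let $M$ be a matroid on $S$ and $N$ a matroid on $T$ with $S\cap T=\emptyset$, let $P=M\mathbin{\Box} N$, and let $U\subseteq V\subseteq S\cup T$. Then $$P(U,V) = (\mathrm{T}^j M)(U\cap S,\,V\cap S)\ \mathbin{\Box}\ (\mathrm{L}^i N)(U\cap T,\,V\cap T),$$ where $j=\nu_N(U\cap T)$ and $i=\lambda_M(V\cap S)$.
   Context: For a matroid $M$ on $S$ write $\rho_M$ for rank, $\rho(M)=\rho_M(S)$, $\nu_M(A)=|A|-\rho_M(A)$, $\lambda_M(A)=\rho(M)-\rho_M(A)$. For matroids $M$ on $S$ and $N$ on $T$ with $S\cap T=\emptyset$, the free product $M\mathbin{\Box} N$ is the matroid on $S\cup T$ whose independent sets are those $A$ with $A\cap S$ independent in $M$ and $\lambda_M(A\cap S)\geq\nu_N(A\cap T)$. For a matroid $M$ on $S$ and $A\subseteq B\subseteq S$, $M(A,B)$ denotes the minor $(M|B)/A=(M/A)|(B\setminus A)$. The truncation $\mathrm{T}M$ has as independent sets the independent sets $A$ of $M$ with $|A|\leq\max\{0,\rho(M)-1\}$; the Higgs lift $\mathrm{L}M$ has as independent sets the $A\subseteq S$ with $\nu_M(A)\leq 1$; $\mathrm{T}^j$, $\mathrm{L}^i$ are the iterates. *)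

theory Defs
  imports Main
begin

text \<open>All constructions below keep the independent sets inside the ground set,
  so equality of matroids is equality of these pairs.\<close>

type_synonym 'a matroid = "'a set \<times> 'a set set"

definition carrier :: "'a matroid \<Rightarrow> 'a set" where
  "carrier M = fst M"

definition indeps :: "'a matroid \<Rightarrow> 'a set set" where
  "indeps M = snd M"

definition matroid :: "'a matroid \<Rightarrow> bool" where
  "matroid M \<longleftrightarrow> finite (carrier M)
     \<and> (\<forall>X\<in>indeps M. X \<subseteq> carrier M)
     \<and> {} \<in> indeps M
     \<and> (\<forall>X Y. X \<in> indeps M \<and> Y \<subseteq> X \<longrightarrow> Y \<in> indeps M)
     \<and> (\<forall>X Y. X \<in> indeps M \<and> Y \<in> indeps M \<and> card X < card Y
          \<longrightarrow> (\<exists>y\<in>Y - X. insert y X \<in> indeps M))"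

definition rk :: "'a matroid \<Rightarrow> 'a set \<Rightarrow> nat" where
  "rk M A = Max {card X | X. X \<subseteq> A \<and> X \<in> indeps M}"

definition rank_of :: "'a matroid \<Rightarrow> nat" where
  "rank_of M = rk M (carrier M)"

definition nul :: "'a matroid \<Rightarrow> 'a set \<Rightarrow> nat" where
  "nul M A = card A - rk M A"

definition lam :: "'a matroid \<Rightarrow> 'a set \<Rightarrow> nat" where
  "lam M A = rank_of M - rk M A"

definition free_product :: "'a matroid \<Rightarrow> 'a matroid \<Rightarrow> 'a matroid" where
  "free_product M N = (carrier M \<union> carrier N,
     {A. A \<subseteq> carrier M \<union> carrier N \<and> A \<inter> carrier M \<in> indeps M
         \<and> lam M (A \<inter> carrier M) \<ge> nul N (A \<inter> carrier N)})"

definition restr :: "'a matroid \<Rightarrow> 'a set \<Rightarrow> 'a matroid" where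
  "restr M B = (B, {X \<in> indeps M. X \<subseteq> B})"

definition contr :: "'a matroid \<Rightarrow> 'a set \<Rightarrow> 'a matroid" where
  "contr M A = (carrier M - A,
     {X. X \<subseteq> carrier M - A \<and> rk M (X \<union> A) = card X + rk M A})"

definition minor :: "'a matroid \<Rightarrow> 'a set \<Rightarrow> 'a set \<Rightarrow> 'a matroid" where
  "minor M A B = contr (restr M B) A"

definition trunc :: "'a matroid \<Rightarrow> 'a matroid" where
  "trunc M = (carrier M, {X \<in> indeps M. int (card X) \<le> max 0 (int (rank_of M) - 1)})"

definition lift :: "'a matroid \<Rightarrow> 'a matroid" where
  "lift M = (carrier M, {X. X \<subseteq> carrier M \<and> nul M X \<le> 1})"

end

theory Submission
  imports Defs
begin

(* Both sides are compared through their rank functions. The free product has rank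
   min (rho_M(A \<inter> S) + |A \<inter> T|) (rho(M) + rho_N(A \<inter> T)), the iterates T^j M and L^i N
   have ranks min rho_M (rho(M) - j) and min |.| (rho_N + i), and the minor M(A,B) has rank
   rho_M(Y \<union> A) - rho_M(A) on Y \<subseteq> B - A. Substituting these formulas, an identity between
   minima of natural numbers gives rho_P(Y \<union> U) = rho_P(U) + rho_Q(Y) for all Y \<subseteq> V - U,
   where Q is the right-hand side. The independent sets of P(U,V) are the Y with
   rho_P(Y \<union> U) = |Y| + rho_P(U), and a family containing the empty set is determined by its
   rank function, so P(U,V) = Q. *)

lemma matroidI:
  assumes "finite (carrier M)" "\<And>X. X \<in> indeps M \<Longrightarrow> X \<subseteq> carrier M" "{} \<in> indeps M"
    and "\<And>X Y. X \<in> indeps M \<Longrightarrow> Y \<subseteq> X \<Longrightarrow> Y \<in> indeps M"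
    and "\<And>X Y. X \<in> indeps M \<Longrightarrow> Y \<in> indeps M \<Longrightarrow> card X < card Y
      \<Longrightarrow> \<exists>y\<in>Y - X. insert y X \<in> indeps M"
  shows "matroid M"
  using assms unfolding matroid_def by blast

lemma matroid_finite_carrier: "matroid M \<Longrightarrow> finite (carrier M)"
  unfolding matroid_def by blast

lemma indep_subset_carrier: "matroid M \<Longrightarrow> X \<in> indeps M \<Longrightarrow> X \<subseteq> carrier M"
  unfolding matroid_def by blast

lemma empty_indep: "matroid M \<Longrightarrow> {} \<in> indeps M"
  unfolding matroid_def by blast

lemma indep_subset: "matroid M \<Longrightarrow> X \<in> indeps M \<Longrightarrow> Y \<subseteq> X \<Longrightarrow> Y \<in> indeps M"
  unfolding matroid_def by blast

lemma indep_augment: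
  "matroid M \<Longrightarrow> X \<in> indeps M \<Longrightarrow> Y \<in> indeps M \<Longrightarrow> card X < card Y
    \<Longrightarrow> \<exists>y\<in>Y - X. insert y X \<in> indeps M"
  unfolding matroid_def by blast

lemma indep_finite: "matroid M \<Longrightarrow> X \<in> indeps M \<Longrightarrow> finite X"
  using finite_subset[OF indep_subset_carrier matroid_finite_carrier] by blast

lemma matroid_eqI: "carrier P = carrier Q \<Longrightarrow> indeps P = indeps Q \<Longrightarrow> P = Q"
  by (simp add: carrier_def indeps_def prod_eq_iff)

section \<open>Rank\<close>

lemma rk_eqI:
  assumes "\<And>Z. Z \<subseteq> A \<Longrightarrow> Z \<in> indeps M \<Longrightarrow> card Z \<le> n"
    and "B \<subseteq> A" "B \<in> indeps M" "card B = n"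
  shows "rk M A = n"
  unfolding rk_def
proof (rule Max_eqI)
  show "finite {card X |X. X \<subseteq> A \<and> X \<in> indeps M}"
    by (rule finite_subset[of _ "{..n}"]) (use assms(1) in auto)
qed (use assms in auto)

lemma finite_indep_cards: "matroid M \<Longrightarrow> finite {card X |X. X \<subseteq> A \<and> X \<in> indeps M}"
  by (rule finite_subset[of _ "card ` Pow (carrier M)"])
    (auto dest: indep_subset_carrier matroid_finite_carrier)

lemma card_le_rk: "matroid M \<Longrightarrow> X \<subseteq> A \<Longrightarrow> X \<in> indeps M \<Longrightarrow> card X \<le> rk M A"
  unfolding rk_def by (rule Max_ge) (auto simp: finite_indep_cards)

lemma obtain_rk_basis:
  assumes "matroid M"
  obtains B where "B \<subseteq> A" "B \<in> indeps M" "card B = rk M A"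
proof -
  have "rk M A \<in> {card X |X. X \<subseteq> A \<and> X \<in> indeps M}"
    unfolding rk_def
  proof (rule Max_in)
    show "finite {card X |X. X \<subseteq> A \<and> X \<in> indeps M}" by (rule finite_indep_cards[OF assms])
    show "{card X |X. X \<subseteq> A \<and> X \<in> indeps M} \<noteq> {}" using empty_indep[OF assms] by blast
  qed
  then show thesis using that by auto
qed

lemma rk_mono: assumes "matroid M" "A \<subseteq> B" shows "rk M A \<le> rk M B"
proof -
  obtain X where "X \<subseteq> A" "X \<in> indeps M" "card X = rk M A" using obtain_rk_basis[OF assms(1)] .
  then show ?thesis using card_le_rk[OF assms(1), of X B] assms(2) by simp
qed

lemma rk_le_card: assumes "matroid M" "finite A" shows "rk M A \<le> card A"
proof -
  obtain X where "X \<subseteq> A" "card X = rk M A" using obtain_rk_basis[OF assms(1)] .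
  then show ?thesis using card_mono[OF assms(2)] by metis
qed

lemma rk_le_rank_of: assumes "matroid M" shows "rk M A \<le> rank_of M"
proof -
  obtain X where "X \<in> indeps M" "card X = rk M A" using obtain_rk_basis[OF assms(1)] .
  then show ?thesis unfolding rank_of_def using card_le_rk[OF assms indep_subset_carrier[OF assms]] by metis
qed

lemma rk_Un_le: assumes "matroid M" "finite X" shows "rk M (A \<union> X) \<le> rk M A + card X"
proof -
  obtain B where B: "B \<subseteq> A \<union> X" "B \<in> indeps M" "card B = rk M (A \<union> X)"
    using obtain_rk_basis[OF assms(1)] .
  have "card B \<le> card (B \<inter> A) + card (B - A)"
    by (metis card_Un_le Int_Diff_Un)
  moreover have "card (B \<inter> A) \<le> rk M A"
    using card_le_rk[OF assms(1) _ indep_subset[OF assms(1) B(2)]] by blast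
  moreover have "card (B - A) \<le> card X"
    using B(1) by (intro card_mono[OF assms(2)]) blast
  ultimately show ?thesis using B(3) by linarith
qed

lemma rk_augment:
  assumes "matroid M" "rk M X < rk M Y"
  shows "\<exists>y\<in>Y - X. rk M (insert y X) = Suc (rk M X)"
proof -
  obtain B where B: "B \<subseteq> X" "B \<in> indeps M" "card B = rk M X"
    using obtain_rk_basis[OF assms(1)] .
  obtain C where C: "C \<subseteq> Y" "C \<in> indeps M" "card C = rk M Y"
    using obtain_rk_basis[OF assms(1)] .
  obtain y where y: "y \<in> C - B" "insert y B \<in> indeps M"
    using indep_augment[OF assms(1) B(2) C(2)] B C assms(2) by auto
  have card_yB: "card (insert y B) = Suc (rk M X)"
    using y B indep_finite[OF assms(1) B(2)] by simp
  have "y \<notin> X"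
    using card_le_rk[OF assms(1) _ y(2), of X] B(1) card_yB by auto
  moreover have "Suc (rk M X) \<le> rk M (insert y X)"
    using card_le_rk[OF assms(1) _ y(2), of "insert y X"] B(1) card_yB by auto
  moreover have "rk M (insert y X) \<le> Suc (rk M X)"
    using rk_Un_le[OF assms(1), of "{y}" X] by simp
  ultimately show ?thesis using y C(1) by (intro bexI[of _ y]) auto
qed

lemma rk_indep: "finite X \<Longrightarrow> X \<in> indeps M \<Longrightarrow> rk M X = card X"
  by (rule rk_eqI[of X _ _ X]) (auto intro: card_mono)

lemma indep_iff_rk_eq_card:
  assumes "finite X" "{} \<in> indeps M"
  shows "X \<in> indeps M \<longleftrightarrow> rk M X = card X"
proof
  assume "rk M X = card X"
  let ?C = "{card Z |Z. Z \<subseteq> X \<and> Z \<in> indeps M}"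
  have "finite ?C"
    by (rule finite_subset[of _ "{..card X}"]) (auto intro: card_mono[OF assms(1)])
  moreover have "?C \<noteq> {}" using assms(2) by blast
  ultimately have "rk M X \<in> ?C" unfolding rk_def by (rule Max_in)
  then obtain Z where "Z \<subseteq> X" "Z \<in> indeps M" "card Z = card X"
    using \<open>rk M X = card X\<close> by auto
  then show "X \<in> indeps M" using card_subset_eq[OF assms(1)] by metis
qed (rule rk_indep[OF assms(1)])

lemma nul_mono: assumes "matroid N" "finite X" "Y \<subseteq> X" shows "nul N Y \<le> nul N X"
proof -
  have "rk N X \<le> rk N Y + card (X - Y)"
    using rk_Un_le[OF assms(1), of "X - Y" Y] assms by (simp add: Un_absorb1)
  moreover have "card X = card Y + card (X - Y)"
    using assms(2,3) by (metis card_Diff_subset finite_subset card_mono le_add_diff_inverse)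
  moreover have "rk N Y \<le> card Y" using rk_le_card[OF assms(1) finite_subset[OF assms(3,2)]] .
  ultimately show ?thesis unfolding nul_def by linarith
qed

lemma exists_subset_nul_le:
  assumes "matroid N" "finite Y"
  shows "\<exists>W\<subseteq>Y. nul N W \<le> k \<and> card W = min (card Y) (rk N Y + k)"
proof -
  obtain B where B: "B \<subseteq> Y" "B \<in> indeps N" "card B = rk N Y"
    using obtain_rk_basis[OF assms(1)] .
  have "min k (card Y - rk N Y) \<le> card (Y - B)"
    using B assms(2) by (simp add: card_Diff_subset finite_subset)
  then obtain W where W: "W \<subseteq> Y - B" "card W = min k (card Y - rk N Y)" "finite W"
    by (rule obtain_subset_with_card_n)
  have fB: "finite B" using finite_subset[OF B(1) assms(2)] .
  have card_BW: "card (B \<union> W) = rk N Y + min k (card Y - rk N Y)"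
    using W B fB by (subst card_Un_disjoint) auto
  have "card B \<le> rk N (B \<union> W)" using card_le_rk[OF assms(1) Un_upper1 B(2)] .
  then have "nul N (B \<union> W) \<le> k" unfolding nul_def using card_BW B by linarith
  moreover have "rk N Y \<le> card Y" using rk_le_card[OF assms] .
  ultimately show ?thesis using card_BW B W by (intro exI[of _ "B \<union> W"]) auto
qed

section \<open>Minors\<close>

lemma restr_simps [simp]:
  "carrier (restr M B) = B" "indeps (restr M B) = {X \<in> indeps M. X \<subseteq> B}"
  by (simp_all add: restr_def carrier_def indeps_def)

lemma contr_simps [simp]:
  "carrier (contr M A) = carrier M - A"
  "indeps (contr M A) = {X. X \<subseteq> carrier M - A \<and> rk M (X \<union> A) = card X + rk M A}"
  by (simp_all add: contr_def carrier_def indeps_def)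

lemma rk_restr: "Y \<subseteq> B \<Longrightarrow> rk (restr M B) Y = rk M Y"
  unfolding rk_def by (rule arg_cong[where f = Max]) auto

lemma matroid_restr: assumes "matroid M" "B \<subseteq> carrier M" shows "matroid (restr M B)"
proof (rule matroidI)
  show "finite (carrier (restr M B))"
    using finite_subset[OF assms(2) matroid_finite_carrier[OF assms(1)]] by simp
  show "\<exists>y\<in>Y - X. insert y X \<in> indeps (restr M B)"
    if "X \<in> indeps (restr M B)" "Y \<in> indeps (restr M B)" "card X < card Y" for X Y
    using that indep_augment[OF assms(1), of X Y] by auto
qed (use empty_indep[OF assms(1)] indep_subset[OF assms(1)] in auto)

lemma matroid_contr: assumes "matroid M" shows "matroid (contr M A)"
proof (rule matroidI)
  show "finite (carrier (contr M A))" using matroid_finite_carrier[OF assms] by simp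
  show "Y \<in> indeps (contr M A)" if X: "X \<in> indeps (contr M A)" and "Y \<subseteq> X" for X Y
  proof -
    have "finite X" using X finite_subset[OF _ matroid_finite_carrier[OF assms]] by auto
    moreover have "Y \<union> A \<union> (X - Y) = X \<union> A" using \<open>Y \<subseteq> X\<close> by blast
    ultimately have "rk M (X \<union> A) \<le> rk M (Y \<union> A) + card (X - Y)"
      using rk_Un_le[OF assms, of "X - Y" "Y \<union> A"] by simp
    moreover have "card X = card Y + card (X - Y)"
      using \<open>finite X\<close> \<open>Y \<subseteq> X\<close> by (metis card_Diff_subset finite_subset card_mono le_add_diff_inverse)
    moreover have "rk M (Y \<union> A) \<le> rk M A + card Y"
      using rk_Un_le[OF assms finite_subset[OF \<open>Y \<subseteq> X\<close> \<open>finite X\<close>], of A] by (simp add: Un_commute)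
    ultimately show ?thesis using X \<open>Y \<subseteq> X\<close> by auto
  qed
  show "\<exists>y\<in>Y - X. insert y X \<in> indeps (contr M A)"
    if X: "X \<in> indeps (contr M A)" and Y: "Y \<in> indeps (contr M A)" and "card X < card Y" for X Y
  proof -
    have "rk M (X \<union> A) < rk M (Y \<union> A)" using X Y \<open>card X < card Y\<close> by simp
    then obtain y where y: "y \<in> (Y \<union> A) - (X \<union> A)" "rk M (insert y (X \<union> A)) = Suc (rk M (X \<union> A))"
      using rk_augment[OF assms] by blast
    have "finite X" using X finite_subset[OF _ matroid_finite_carrier[OF assms]] by auto
    then have "rk M (insert y X \<union> A) = card (insert y X) + rk M A" using X y by simp
    then show ?thesis using X Y y by (intro bexI[of _ y]) auto
  qed
qed auto

lemma rk_contr: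
  assumes "matroid M" "X \<subseteq> carrier M - A"
  shows "rk (contr M A) X = rk M (X \<union> A) - rk M A"
proof -
  obtain Z where Z: "Z \<subseteq> X" "Z \<in> indeps (contr M A)" "card Z = rk (contr M A) X"
    using obtain_rk_basis[OF matroid_contr[OF assms(1)]] .
  have "rk M (Z \<union> A) = rk M (X \<union> A)"
  proof (rule antisym)
    show "rk M (Z \<union> A) \<le> rk M (X \<union> A)" using Z(1) by (intro rk_mono[OF assms(1)]) blast
    show "rk M (X \<union> A) \<le> rk M (Z \<union> A)"
    proof (rule ccontr)
      assume "\<not> ?thesis"
      then obtain y where y: "y \<in> X - Z" "rk M (insert y (Z \<union> A)) = Suc (rk M (Z \<union> A))"
        using rk_augment[OF assms(1), of "Z \<union> A" "X \<union> A"] by auto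
      have "finite Z" using Z(2) finite_subset[OF _ matroid_finite_carrier[OF assms(1)]] by auto
      then have "insert y Z \<in> indeps (contr M A)" using Z(2) y assms(2) by auto
      then have "card (insert y Z) \<le> card Z"
        using card_le_rk[OF matroid_contr[OF assms(1)], of "insert y Z" X] Z y by auto
      then show False using \<open>finite Z\<close> y by simp
    qed
  qed
  then show ?thesis using Z by simp
qed

lemma minor_simps:
  "carrier (minor M A B) = B - A"
  "indeps (minor M A B) = {X. X \<subseteq> B - A \<and> rk (restr M B) (X \<union> A) = card X + rk (restr M B) A}"
  by (simp_all add: minor_def)

lemma rk_restr_Un:
  "A \<subseteq> B \<Longrightarrow> X \<subseteq> B - A \<Longrightarrow> rk (restr M B) (X \<union> A) = rk M (X \<union> A)"
  by (rule rk_restr) blast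

lemma indep_minor_iff:
  assumes "A \<subseteq> B"
  shows "X \<in> indeps (minor M A B) \<longleftrightarrow> X \<subseteq> B - A \<and> rk M (X \<union> A) = card X + rk M A"
  using rk_restr_Un[OF assms, of X M] rk_restr[OF assms, of M] by (auto simp: minor_simps)

lemma matroid_minor: "matroid M \<Longrightarrow> B \<subseteq> carrier M \<Longrightarrow> matroid (minor M A B)"
  unfolding minor_def by (intro matroid_contr matroid_restr)

lemma rk_minor:
  assumes "matroid M" "A \<subseteq> B" "B \<subseteq> carrier M" "Y \<subseteq> B - A"
  shows "rk (minor M A B) Y = rk M (Y \<union> A) - rk M A"
  unfolding minor_def using assms
  by (subst rk_contr) (auto simp: matroid_restr rk_restr rk_restr_Un)

lemma rank_of_minor:
  assumes "matroid M" "A \<subseteq> B" "B \<subseteq> carrier M"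
  shows "rank_of (minor M A B) = rk M B - rk M A"
proof -
  have "B - A \<union> A = B" using assms(2) by blast
  then show ?thesis unfolding rank_of_def using rk_minor[OF assms] by (simp add: minor_simps)
qed

lemma minor_eqI:
  assumes "U \<subseteq> V" "finite V" "carrier Q = V - U" "{} \<in> indeps Q"
    and "\<And>X. X \<in> indeps Q \<Longrightarrow> X \<subseteq> V - U"
    and "\<And>Y. Y \<subseteq> V - U \<Longrightarrow> rk M (Y \<union> U) = rk M U + rk Q Y"
  shows "minor M U V = Q"
proof (rule matroid_eqI)
  show "carrier (minor M U V) = carrier Q" by (simp add: minor_simps assms(3))
  show "indeps (minor M U V) = indeps Q"
  proof (intro set_eqI iffI)
    fix X assume "X \<in> indeps (minor M U V)"
    then have "X \<subseteq> V - U" "rk Q X = card X" using assms(6) by (auto simp: indep_minor_iff[OF assms(1)])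
    then show "X \<in> indeps Q"
      using indep_iff_rk_eq_card[OF finite_subset[OF _ assms(2)] assms(4)] by blast
  next
    fix X assume "X \<in> indeps Q"
    then have "X \<subseteq> V - U" "rk Q X = card X"
      using assms(5) indep_iff_rk_eq_card[OF finite_subset[OF _ assms(2)] assms(4)] by blast+
    then show "X \<in> indeps (minor M U V)" using assms(6) by (simp add: indep_minor_iff[OF assms(1)])
  qed
qed

section \<open>Truncation and Higgs lift\<close>

definition trunc_to :: "'a matroid \<Rightarrow> nat \<Rightarrow> 'a matroid" where
  "trunc_to M m = (carrier M, {X \<in> indeps M. card X \<le> m})"

lemma trunc_to_simps [simp]:
  "carrier (trunc_to M m) = carrier M" "indeps (trunc_to M m) = {X \<in> indeps M. card X \<le> m}"
  by (simp_all add: trunc_to_def carrier_def indeps_def)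

lemma matroid_trunc_to: assumes "matroid M" shows "matroid (trunc_to M m)"
proof (rule matroidI)
  show "Y \<in> indeps (trunc_to M m)" if X: "X \<in> indeps (trunc_to M m)" and "Y \<subseteq> X" for X Y
  proof -
    have "card Y \<le> card X" using X \<open>Y \<subseteq> X\<close> card_mono[OF indep_finite[OF assms]] by simp
    then show ?thesis using X \<open>Y \<subseteq> X\<close> indep_subset[OF assms] by auto
  qed
  show "\<exists>y\<in>Y - X. insert y X \<in> indeps (trunc_to M m)"
    if X: "X \<in> indeps (trunc_to M m)" and Y: "Y \<in> indeps (trunc_to M m)" and "card X < card Y" for X Y
  proof -
    obtain y where "y \<in> Y - X" "insert y X \<in> indeps M"
      using X Y \<open>card X < card Y\<close> indep_augment[OF assms] by auto
    moreover have "finite X" using X indep_finite[OF assms] by simp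
    ultimately show ?thesis using X Y \<open>card X < card Y\<close> by auto
  qed
qed (simp_all add: matroid_finite_carrier[OF assms] indep_subset_carrier[OF assms] empty_indep[OF assms])

lemma rk_trunc_to: assumes "matroid M" shows "rk (trunc_to M m) Y = min (rk M Y) m"
proof -
  obtain B where B: "B \<subseteq> Y" "B \<in> indeps M" "card B = rk M Y" using obtain_rk_basis[OF assms] .
  obtain W where W: "W \<subseteq> B" "card W = min (rk M Y) m"
    using obtain_subset_with_card_n[of "min (rk M Y) m" B] B(3) by auto
  show ?thesis
  proof (rule rk_eqI[of Y _ _ W])
    show "card Z \<le> min (rk M Y) m" if "Z \<subseteq> Y" "Z \<in> indeps (trunc_to M m)" for Z
      using that card_le_rk[OF assms] by auto
    show "W \<in> indeps (trunc_to M m)" using W B indep_subset[OF assms B(2) W(1)] by simp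
  qed (use W B in auto)
qed

lemma rank_of_trunc_to: "matroid M \<Longrightarrow> rank_of (trunc_to M m) = min (rank_of M) m"
  unfolding rank_of_def by (simp add: rk_trunc_to)

lemma trunc_eq_trunc_to: "trunc M = trunc_to M (rank_of M - 1)"
proof -
  have "int n \<le> max 0 (int r - 1) \<longleftrightarrow> n \<le> r - 1" for n r by linarith
  then show ?thesis by (simp add: trunc_def trunc_to_def)
qed

lemma trunc_to_trunc_to: "trunc_to (trunc_to M m) m' = trunc_to M (min m m')"
  by (rule matroid_eqI) auto

lemma trunc_iter_eq: assumes "matroid M" shows "(trunc ^^ k) M = trunc_to M (rank_of M - k)"
proof (induction k)
  case 0
  have "trunc_to M (rank_of M) = M"
    using card_le_rk[OF assms indep_subset_carrier[OF assms]]
    by (intro matroid_eqI) (auto simp: rank_of_def)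
  then show ?case by simp
next
  case (Suc k)
  have "(trunc ^^ Suc k) M = trunc (trunc_to M (rank_of M - k))" using Suc by simp
  also have "\<dots> = trunc_to M (rank_of M - Suc k)"
    by (simp add: trunc_eq_trunc_to trunc_to_trunc_to rank_of_trunc_to[OF assms])
  finally show ?case .
qed

definition lift_by :: "'a matroid \<Rightarrow> nat \<Rightarrow> 'a matroid" where
  "lift_by N k = (carrier N, {X. X \<subseteq> carrier N \<and> nul N X \<le> k})"

lemma lift_by_simps [simp]:
  "carrier (lift_by N k) = carrier N" "indeps (lift_by N k) = {X. X \<subseteq> carrier N \<and> nul N X \<le> k}"
  by (simp_all add: lift_by_def carrier_def indeps_def)

lemma lift_by_augment:
  assumes N: "matroid N" and X: "X \<in> indeps (lift_by N k)" and Y: "Y \<in> indeps (lift_by N k)"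
    and "card X < card Y"
  shows "\<exists>y\<in>Y - X. insert y X \<in> indeps (lift_by N k)"
proof -
  have fin: "finite Z" if "Z \<subseteq> carrier N" for Z
    using finite_subset[OF that matroid_finite_carrier[OF N]] .
  have "finite X" using X fin by simp
  obtain y where y: "y \<in> Y - X" "nul N (insert y X) \<le> k"
  proof (cases "nul N X < k")
    case True
    have "\<not> Y \<subseteq> X"
    proof
      assume "Y \<subseteq> X"
      then show False using \<open>card X < card Y\<close> card_mono[OF \<open>finite X\<close>] by (simp add: leD)
    qed
    then obtain y where y: "y \<in> Y - X" by blast
    have "rk N X \<le> rk N (insert y X)" using rk_mono[OF N subset_insertI] .
    moreover have "card (insert y X) = Suc (card X)" using y \<open>finite X\<close> by simp
    ultimately have "nul N (insert y X) \<le> k" using True unfolding nul_def by linarith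
    then show thesis using that y by blast
  next
    case False
    then have "nul N Y \<le> nul N X" using X Y by simp
    then have "rk N X < rk N Y"
      using X Y \<open>card X < card Y\<close> rk_le_card[OF N fin, of X] rk_le_card[OF N fin, of Y]
      unfolding nul_def by simp
    then obtain y where y: "y \<in> Y - X" "rk N (insert y X) = Suc (rk N X)"
      using rk_augment[OF N] by blast
    moreover have "card (insert y X) = Suc (card X)" using y \<open>finite X\<close> by simp
    ultimately have "nul N (insert y X) = nul N X" unfolding nul_def by simp
    then have "nul N (insert y X) \<le> k" using X by simp
    then show thesis using that y by blast
  qed
  then show ?thesis using X Y by auto
qed

lemma matroid_lift_by: assumes "matroid N" shows "matroid (lift_by N k)"
proof (rule matroidI)
  show "{} \<in> indeps (lift_by N k)" by (simp add: nul_def)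
  show "Y \<in> indeps (lift_by N k)" if X: "X \<in> indeps (lift_by N k)" and "Y \<subseteq> X" for X Y
  proof -
    have "X \<subseteq> carrier N" "nul N X \<le> k" using X by auto
    moreover have "finite X" using \<open>X \<subseteq> carrier N\<close> finite_subset matroid_finite_carrier[OF assms] by blast
    ultimately show ?thesis using nul_mono[OF assms _ \<open>Y \<subseteq> X\<close>] \<open>Y \<subseteq> X\<close> by fastforce
  qed
  show "\<exists>y\<in>Y - X. insert y X \<in> indeps (lift_by N k)"
    if "X \<in> indeps (lift_by N k)" "Y \<in> indeps (lift_by N k)" "card X < card Y" for X Y
    using lift_by_augment[OF assms that] .
qed (simp_all add: matroid_finite_carrier[OF assms])

lemma rk_lift_by:
  assumes "matroid N" "Y \<subseteq> carrier N"
  shows "rk (lift_by N k) Y = min (card Y) (rk N Y + k)"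
proof -
  have "finite Y" using finite_subset[OF assms(2) matroid_finite_carrier[OF assms(1)]] .
  obtain W where W: "W \<subseteq> Y" "nul N W \<le> k" "card W = min (card Y) (rk N Y + k)"
    using exists_subset_nul_le[OF assms(1) \<open>finite Y\<close>] by blast
  show ?thesis
  proof (rule rk_eqI[of Y _ _ W])
    fix Z assume Z: "Z \<subseteq> Y" "Z \<in> indeps (lift_by N k)"
    then have "nul N Z \<le> k" "rk N Z \<le> rk N Y" "card Z \<le> card Y"
      using rk_mono[OF assms(1)] card_mono[OF \<open>finite Y\<close>] by auto
    then show "card Z \<le> min (card Y) (rk N Y + k)" unfolding nul_def by linarith
  qed (use W assms in auto)
qed

lemma nul_lift_by: "matroid N \<Longrightarrow> X \<subseteq> carrier N \<Longrightarrow> nul (lift_by N k) X = nul N X - k"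
  unfolding nul_def by (simp add: rk_lift_by)

lemma lift_eq_lift_by: "lift N = lift_by N 1"
  by (simp add: lift_def lift_by_def)

lemma lift_by_lift_by: "matroid N \<Longrightarrow> lift_by (lift_by N k) l = lift_by N (k + l)"
  by (rule matroid_eqI) (auto simp: nul_lift_by)

lemma lift_iter_eq: assumes "matroid N" shows "(lift ^^ k) N = lift_by N k"
proof (induction k)
  case 0
  have "X \<in> indeps N \<longleftrightarrow> X \<subseteq> carrier N \<and> nul N X \<le> 0" for X
  proof (cases "X \<subseteq> carrier N")
    case True
    then have "finite X" using finite_subset[OF _ matroid_finite_carrier[OF assms]] by blast
    then show ?thesis
      using True indep_iff_rk_eq_card[OF _ empty_indep[OF assms]] rk_le_card[OF assms]
      unfolding nul_def by (metis diff_is_0_eq le0 le_antisym)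
  qed (use indep_subset_carrier[OF assms] in blast)
  then have "lift_by N 0 = N" by (intro matroid_eqI) auto
  then show ?case by simp
next
  case (Suc k)
  then show ?case by (simp add: lift_eq_lift_by lift_by_lift_by[OF assms])
qed

section \<open>Free product\<close>

lemma free_product_simps [simp]:
  "carrier (free_product M N) = carrier M \<union> carrier N"
  "indeps (free_product M N) = {A. A \<subseteq> carrier M \<union> carrier N \<and> A \<inter> carrier M \<in> indeps M
      \<and> nul N (A \<inter> carrier N) \<le> lam M (A \<inter> carrier M)}"
  by (simp_all add: free_product_def carrier_def indeps_def)

lemma card_le_rk_free_product:
  assumes M: "matroid M" and N: "matroid N" and disj: "carrier M \<inter> carrier N = {}"
    and Z: "Z \<subseteq> A" "Z \<in> indeps (free_product M N)"
  shows "card Z \<le> min (rk M (A \<inter> carrier M) + card (A \<inter> carrier N)) (rank_of M + rk N (A \<inter> carrier N))"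
proof -
  let ?S = "carrier M" and ?T = "carrier N"
  have ZS: "Z \<inter> ?S \<in> indeps M" and nul_le: "nul N (Z \<inter> ?T) \<le> lam M (Z \<inter> ?S)" using Z(2) by auto
  have "Z = (Z \<inter> ?S) \<union> (Z \<inter> ?T)" using Z(2) by auto
  then have "card Z = card (Z \<inter> ?S) + card (Z \<inter> ?T)"
    using disj matroid_finite_carrier[OF M] matroid_finite_carrier[OF N]
    by (metis card_Un_disjoint finite_Int disjoint_iff IntD2)
  moreover have "lam M (Z \<inter> ?S) = rank_of M - card (Z \<inter> ?S)"
    unfolding lam_def using rk_indep[OF indep_finite[OF M ZS] ZS] by simp
  moreover have "card (Z \<inter> ?S) \<le> rk M (A \<inter> ?S)"
    using card_le_rk[OF M _ ZS, of "A \<inter> ?S"] Z(1) by blast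
  moreover have "card (Z \<inter> ?T) \<le> card (A \<inter> ?T)"
    by (rule card_mono) (use Z(1) matroid_finite_carrier[OF N] in auto)
  moreover have "rk N (Z \<inter> ?T) \<le> rk N (A \<inter> ?T)"
    by (rule rk_mono[OF N]) (use Z(1) in blast)
  moreover have "card (Z \<inter> ?S) \<le> rank_of M"
    using card_le_rk[OF M Int_lower2 ZS] unfolding rank_of_def .
  ultimately show ?thesis using nul_le unfolding nul_def by linarith
qed

lemma obtain_free_product_basis:
  assumes M: "matroid M" and N: "matroid N" and disj: "carrier M \<inter> carrier N = {}"
  obtains Z where "Z \<subseteq> A" "Z \<in> indeps (free_product M N)"
    "card Z = min (rk M (A \<inter> carrier M) + card (A \<inter> carrier N)) (rank_of M + rk N (A \<inter> carrier N))"
proof -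
  let ?S = "carrier M" and ?T = "carrier N"
  have fin_T: "finite (A \<inter> ?T)" using matroid_finite_carrier[OF N] by simp
  obtain B where B: "B \<subseteq> A \<inter> ?S" "B \<in> indeps M" "card B = rk M (A \<inter> ?S)"
    using obtain_rk_basis[OF M] .
  obtain W where W: "W \<subseteq> A \<inter> ?T" "nul N W \<le> rank_of M - rk M (A \<inter> ?S)"
    "card W = min (card (A \<inter> ?T)) (rk N (A \<inter> ?T) + (rank_of M - rk M (A \<inter> ?S)))"
    using exists_subset_nul_le[OF N fin_T] by blast
  have "(B \<union> W) \<inter> ?S = B" "(B \<union> W) \<inter> ?T = W" using B W disj by auto
  moreover have "lam M B = rank_of M - rk M (A \<inter> ?S)"
    unfolding lam_def using rk_indep[OF indep_finite[OF M B(2)] B(2)] B(3) by simp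
  ultimately have "B \<union> W \<in> indeps (free_product M N)" using B(1,2) W(1,2) by auto
  moreover have "card (B \<union> W) = card B + card W"
    using B W disj indep_finite[OF M B(2)] finite_subset[OF W(1) fin_T] by (intro card_Un_disjoint) auto
  then have "card (B \<union> W) = min (rk M (A \<inter> ?S) + card (A \<inter> ?T)) (rank_of M + rk N (A \<inter> ?T))"
    using B(3) W(3) rk_le_rank_of[OF M, of "A \<inter> ?S"] by (simp add: min_def) arith
  moreover have "B \<union> W \<subseteq> A" using B W by blast
  ultimately show thesis using that by blast
qed

lemma rk_free_product:
  assumes "matroid M" "matroid N" "carrier M \<inter> carrier N = {}"
  shows "rk (free_product M N) A =
    min (rk M (A \<inter> carrier M) + card (A \<inter> carrier N)) (rank_of M + rk N (A \<inter> carrier N))"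
proof -
  obtain Z where "Z \<subseteq> A" "Z \<in> indeps (free_product M N)"
    "card Z = min (rk M (A \<inter> carrier M) + card (A \<inter> carrier N)) (rank_of M + rk N (A \<inter> carrier N))"
    using obtain_free_product_basis[OF assms] .
  then show ?thesis by (intro rk_eqI card_le_rk_free_product[OF assms])
qed

lemma rk_free_product_minors:
  assumes M: "matroid M" and N: "matroid N" and disj: "carrier M \<inter> carrier N = {}"
    and AB: "A \<subseteq> B" "B \<subseteq> carrier M" and CD: "C \<subseteq> D" "D \<subseteq> carrier N"
    and Y: "Y \<subseteq> (B - A) \<union> (D - C)"
  shows "rk (free_product (minor M A B) (minor N C D)) Y =
    min (rk M (Y \<inter> B \<union> A) - rk M A + card (Y \<inter> D))
        (rk M B - rk M A + (rk N (Y \<inter> D \<union> C) - rk N C))"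
proof -
  have "carrier (minor M A B) \<inter> carrier (minor N C D) = {}"
    using disj AB CD by (auto simp: minor_simps)
  then have "rk (free_product (minor M A B) (minor N C D)) Y =
      min (rk (minor M A B) (Y \<inter> (B - A)) + card (Y \<inter> (D - C)))
          (rank_of (minor M A B) + rk (minor N C D) (Y \<inter> (D - C)))"
    using rk_free_product[OF matroid_minor[OF M AB(2)] matroid_minor[OF N CD(2)]]
    by (simp add: minor_simps)
  moreover have "Y \<inter> (B - A) = Y \<inter> B" "Y \<inter> (D - C) = Y \<inter> D" using Y disj AB CD by blast+
  moreover have "Y \<inter> B \<subseteq> B - A" "Y \<inter> D \<subseteq> D - C" using Y disj AB CD by blast+
  ultimately show ?thesis
    by (simp add: rk_minor[OF M AB] rk_minor[OF N CD] rank_of_minor[OF M AB])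
qed

lemma rk_free_product_trunc_lift_minors:
  assumes M: "matroid M" and N: "matroid N" and disj: "carrier M \<inter> carrier N = {}"
    and UV: "U \<subseteq> V" "V \<subseteq> carrier M \<union> carrier N" and Y: "Y \<subseteq> V - U"
  shows "rk (free_product (minor (trunc_to M m) (U \<inter> carrier M) (V \<inter> carrier M))
                          (minor (lift_by N k) (U \<inter> carrier N) (V \<inter> carrier N))) Y =
    min (min (rk M ((Y \<union> U) \<inter> carrier M)) m - min (rk M (U \<inter> carrier M)) m + card (Y \<inter> carrier N))
        (min (rk M (V \<inter> carrier M)) m - min (rk M (U \<inter> carrier M)) m
          + (min (card ((Y \<union> U) \<inter> carrier N)) (rk N ((Y \<union> U) \<inter> carrier N) + k)
             - min (card (U \<inter> carrier N)) (rk N (U \<inter> carrier N) + k)))"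
proof -
  let ?S = "carrier M" and ?T = "carrier N"
  have "U \<inter> ?S \<subseteq> V \<inter> ?S" "V \<inter> ?S \<subseteq> carrier (trunc_to M m)"
    "U \<inter> ?T \<subseteq> V \<inter> ?T" "V \<inter> ?T \<subseteq> carrier (lift_by N k)"
    "Y \<subseteq> (V \<inter> ?S - U \<inter> ?S) \<union> (V \<inter> ?T - U \<inter> ?T)"
    using UV Y by auto
  note rk_Y = rk_free_product_minors[OF matroid_trunc_to[OF M] matroid_lift_by[OF N] _ this]
  have "Y \<inter> (V \<inter> ?S) \<union> U \<inter> ?S = (Y \<union> U) \<inter> ?S" "Y \<inter> (V \<inter> ?T) = Y \<inter> ?T"
    "Y \<inter> ?T \<union> U \<inter> ?T = (Y \<union> U) \<inter> ?T"
    using Y by blast+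
  with rk_Y disj have "rk (free_product (minor (trunc_to M m) (U \<inter> ?S) (V \<inter> ?S))
                          (minor (lift_by N k) (U \<inter> ?T) (V \<inter> ?T))) Y =
    min (rk (trunc_to M m) ((Y \<union> U) \<inter> ?S) - rk (trunc_to M m) (U \<inter> ?S) + card (Y \<inter> ?T))
        (rk (trunc_to M m) (V \<inter> ?S) - rk (trunc_to M m) (U \<inter> ?S)
          + (rk (lift_by N k) ((Y \<union> U) \<inter> ?T) - rk (lift_by N k) (U \<inter> ?T)))"
    by simp
  then show ?thesis unfolding rk_trunc_to[OF M] rk_lift_by[OF N Int_lower2] .
qed

(* The variables stand for a = rho_M((Y \<union> U) \<inter> S), b = rho_M(U \<inter> S), c = rho_M(V \<inter> S),
   d = rho_N((Y \<union> U) \<inter> T), e = rho_N(U \<inter> T), t = |Y \<inter> T|, u = |U \<inter> T|, r = rho(M);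
   j = nu_N(U \<inter> T), i = lambda_M(V \<inter> S), and k = r - j is the truncation level. *)
lemma free_product_minor_rank_identity_gt:
  fixes a b c d e r t u i k :: nat
  assumes "b \<le> a" "a \<le> c" "e \<le> d" "d \<le> e + t"
    and k: "b < k" "k + u = r + e" and ic: "i + c = r"
  shows "b + u + min (min a k - b + t) (min c k - b + (min (t + u) (d + i) - min u (e + i)))
    = min (a + (t + u)) (r + d)"
proof (cases "c \<le> k")
  case True
  then have "min u (e + i) = u" "min a k = a" "min c k = c" and u_le: "u \<le> min (t + u) (d + i)"
    using k ic assms(2,3) by simp_all
  then have "b + u + min (min a k - b + t) (min c k - b + (min (t + u) (d + i) - min u (e + i)))
      = min (b + u + (a - b + t)) (b + u + (c - b + (min (t + u) (d + i) - u)))"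
    by (simp only: min_add_distrib_right)
  also have "\<dots> = min (a + (t + u)) (c + min (t + u) (d + i))"
    using u_le assms(1,2) by (intro arg_cong2[where f = min]) simp_all
  also have "c + min (t + u) (d + i) = min (c + (t + u)) (r + d)"
    using ic by (simp add: min_add_distrib_right)
  also have "min (a + (t + u)) (min (c + (t + u)) (r + d)) = min (a + (t + u)) (r + d)"
    using assms(2) by (simp add: min.assoc[symmetric] min.absorb1)
  finally show ?thesis .
next
  case False
  then have "min u (e + i) = e + i" "min (t + u) (d + i) = d + i" "min c k = k"
    using k ic assms(4) by simp_all
  then have "b + u + min (min a k - b + t) (min c k - b + (min (t + u) (d + i) - min u (e + i)))
      = min (b + u + (min a k - b + t)) (b + u + (k - b + (d + i - (e + i))))"
    by (simp only: min_add_distrib_right)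
  also have "\<dots> = min (min a k + (t + u)) (k + u + (d - e))"
    using k(1) assms(1) by (intro arg_cong2[where f = min]) simp_all
  also have "\<dots> = min (min (a + (t + u)) (r + e + t)) (r + d)"
    using k(2) assms(3) by (simp add: min_add_distrib_left)
  also have "\<dots> = min (a + (t + u)) (r + d)"
    using assms(4) by (simp add: min.assoc min.absorb2)
  finally show ?thesis .
qed

lemma free_product_minor_rank_identity:
  fixes a b c d e r t u j i :: nat
  assumes "b \<le> a" "a \<le> c" "c \<le> r" "e \<le> d" "d \<le> e + t" "d \<le> t + u" "e \<le> u"
    and j: "j = u - e" and i: "i = r - c"
  shows "min (a + (t + u)) (r + d) = min (b + u) (r + e) +
    min (min a (r - j) - min b (r - j) + t)
        (min c (r - j) - min b (r - j) + (min (t + u) (d + i) - min u (e + i)))"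
proof -
  have je: "j + e = u" and ic: "i + c = r" using j i assms by simp_all
  show ?thesis
  proof (cases "r \<le> b + j")
    case True
    \<comment> \<open>the truncation level is at most b, so the truncated minor has rank 0\<close>
    then have "r - j \<le> b" by simp
    then have "min a (r - j) = r - j" "min b (r - j) = r - j" "min c (r - j) = r - j"
      using assms(1,2) by simp_all
    moreover have "min u (e + i) = e + i" "min (t + u) (d + i) = d + i" "min t (d - e) = d - e"
      "min (b + u) (r + e) = r + e" "min (a + (t + u)) (r + d) = r + d"
      using True assms(1-7) je ic by simp_all
    ultimately show ?thesis using assms(4) by simp
  next
    case False
    define k where "k = r - j"
    have "b < k" "k + u = r + e" using False je k_def by simp_all
    then have "min (b + u) (r + e) = b + u" "min b k = b" by simp_all
    with free_product_minor_rank_identity_gt[OF assms(1,2,4,5) \<open>b < k\<close> \<open>k + u = r + e\<close> ic]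
    show ?thesis unfolding k_def[symmetric] by simp
  qed
qed

lemma rk_free_product_Un_minors:
  assumes M: "matroid M" and N: "matroid N" and disj: "carrier M \<inter> carrier N = {}"
    and UV: "U \<subseteq> V" "V \<subseteq> carrier M \<union> carrier N" and Y: "Y \<subseteq> V - U"
  defines "M' \<equiv> minor (trunc_to M (rank_of M - nul N (U \<inter> carrier N))) (U \<inter> carrier M) (V \<inter> carrier M)"
    and "N' \<equiv> minor (lift_by N (lam M (V \<inter> carrier M))) (U \<inter> carrier N) (V \<inter> carrier N)"
  shows "rk (free_product M N) (Y \<union> U) = rk (free_product M N) U + rk (free_product M' N') Y"
proof -
  let ?S = "carrier M" and ?T = "carrier N"
  define a b c where "a = rk M ((Y \<union> U) \<inter> ?S)" and "b = rk M (U \<inter> ?S)" and "c = rk M (V \<inter> ?S)"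
  define d e where "d = rk N ((Y \<union> U) \<inter> ?T)" and "e = rk N (U \<inter> ?T)"
  define t u where "t = card (Y \<inter> ?T)" and "u = card (U \<inter> ?T)"
  have fin_T: "finite ?T" using matroid_finite_carrier[OF N] .
  have YU_T: "Y \<inter> ?T \<union> U \<inter> ?T = (Y \<union> U) \<inter> ?T" by blast
  have card_YU: "card ((Y \<union> U) \<inter> ?T) = t + u"
    unfolding YU_T[symmetric] t_def u_def using Y fin_T by (intro card_Un_disjoint) auto
  have "b \<le> a" "a \<le> c" unfolding a_def b_def c_def using Y UV by (auto intro!: rk_mono[OF M])
  moreover have "c \<le> rank_of M" unfolding c_def using rk_le_rank_of[OF M] .
  moreover have "e \<le> d" unfolding d_def e_def by (auto intro!: rk_mono[OF N])
  moreover have "d \<le> e + t"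
    using rk_Un_le[OF N, of "Y \<inter> ?T" "U \<inter> ?T"] fin_T
    unfolding d_def e_def t_def YU_T[symmetric] by (simp add: Un_commute)
  moreover have "d \<le> t + u" "e \<le> u"
    using rk_le_card[OF N] fin_T card_YU unfolding d_def e_def u_def by (metis finite_Int)+
  moreover have "nul N (U \<inter> ?T) = u - e" "lam M (V \<inter> ?S) = rank_of M - c"
    unfolding u_def e_def c_def nul_def lam_def by simp_all
  moreover have "rk (free_product M N) (Y \<union> U) = min (a + (t + u)) (rank_of M + d)"
    using card_YU unfolding rk_free_product[OF M N disj] a_def d_def by simp
  moreover have "rk (free_product M N) U = min (b + u) (rank_of M + e)"
    unfolding rk_free_product[OF M N disj] b_def e_def u_def ..
  moreover have "rk (free_product M' N') Y =
      min (min a (rank_of M - nul N (U \<inter> ?T)) - min b (rank_of M - nul N (U \<inter> ?T)) + t)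
        (min c (rank_of M - nul N (U \<inter> ?T)) - min b (rank_of M - nul N (U \<inter> ?T))
          + (min (t + u) (d + lam M (V \<inter> ?S)) - min u (e + lam M (V \<inter> ?S))))"
    unfolding M'_def N'_def rk_free_product_trunc_lift_minors[OF M N disj UV Y] card_YU
      a_def b_def c_def d_def e_def t_def u_def ..
  ultimately show ?thesis by (simp only:) (rule free_product_minor_rank_identity[OF _ _ _ _ _ _ _ refl refl])
qed

theorem theorem5p3:
  fixes M N :: "'a matroid" and U V :: "'a set"
  assumes "matroid M" and "matroid N"
    and "carrier M \<inter> carrier N = {}"
    and "U \<subseteq> V" and "V \<subseteq> carrier M \<union> carrier N"
  shows "minor (free_product M N) U V =
    free_product
      (minor ((trunc ^^ nul N (U \<inter> carrier N)) M) (U \<inter> carrier M) (V \<inter> carrier M))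
      (minor ((lift ^^ lam M (V \<inter> carrier M)) N) (U \<inter> carrier N) (V \<inter> carrier N))"
proof -
  let ?M' = "minor (trunc_to M (rank_of M - nul N (U \<inter> carrier N))) (U \<inter> carrier M) (V \<inter> carrier M)"
  let ?N' = "minor (lift_by N (lam M (V \<inter> carrier M))) (U \<inter> carrier N) (V \<inter> carrier N)"
  have "minor (free_product M N) U V = free_product ?M' ?N'"
  proof (rule minor_eqI[OF assms(4)])
    show "finite V"
      using assms(5) matroid_finite_carrier[OF assms(1)] matroid_finite_carrier[OF assms(2)]
      by (meson finite_Un finite_subset)
    show "carrier (free_product ?M' ?N') = V - U" using assms(5) by (auto simp: minor_simps)
    show "{} \<in> indeps (free_product ?M' ?N')" by (simp add: minor_simps nul_def)
    show "X \<subseteq> V - U" if "X \<in> indeps (free_product ?M' ?N')" for X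
      using that by (auto simp: minor_simps)
    show "rk (free_product M N) (Y \<union> U) = rk (free_product M N) U + rk (free_product ?M' ?N') Y"
      if "Y \<subseteq> V - U" for Y
      using rk_free_product_Un_minors[OF assms that] by simp
  qed
  then show ?thesis by (simp add: trunc_iter_eq[OF assms(1)] lift_iter_eq[OF assms(2)])
qed

end
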